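(* Let $R$ be a uniform $L$-layered $1$-semifield$^\dagger$ and $t\in\mathbb{N}$. If $f=\sum_{i=0}^m\alpha_i\lambda^i\in R[\lambda]$, then $|\Re(f,\lambda^tg)|=\alpha_0^t|\Re(f,g)|$ for every $g\in R[\lambda]$; likewise, if $g=\sum_{i=0}^n\beta_i\lambda^i$, then $|\Re(\lambda^tf,g)|=\beta_0^t|\Re(f,g)|$.
   Context: Concretely, $R=R(L,\mathcal{G})$ with $L$ a totally ordered commutative semiring$^\dagger$ (semiring without necessarily a zero) and $\mathcal{G}$ a totally ordered abelian group; elements $x^{[\ell]}$ ($x\in\mathcal{G}$, layer $\ell$), $x^{[k]}y^{[\ell]}=(xy)^{[k\ell]}$, $x^{[k]}+y^{[\ell]}$ equal to $x^{[k]}$ if $x>y$, $y^{[\ell]}$ if $x<y$, $x^{[k+\ell]}$ if $x=y$; a zero element $\mathbb{0}_R$ is formally adjoined. The layered permanent of an $N\times N$ matrix is $|A|=\sum_{\sigma\in S_N}\prod_i a_{i,\sigma(i)}$. For $f=\sum_{i=0}^m\alpha_i\lambda^i$, $A_n(f)$ is the $n\times(m+n)$ matrix whose $r$-th row is $(\mathbb{0},\dots,\mathbb{0},\alpha_0,\dots,\alpha_m,\mathbb{0},\dots)$ with $r-1$ leading zeros; the Sylvester matrix is $\Re(f,g)=\binom{A_n(f)}{A_m(g)}$ ($\deg f=m$, $\deg g=n$, both $\ge1$), and the layered resultant is $|\Re(f,g)|$; if $f=\alpha_0$ is constant the resultant is $\alpha_0^n$, and symmetrically $\beta_0^m$ if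 $g=\beta_0$ is constant. *)

theory Defs
  imports "HOL-Computational_Algebra.Polynomial" "HOL-Combinatorics.Permutations"
begin

text \<open>The uniform L-layered 1-semifield R(L,G): elements x^[l] (written Lay x l) with x in a
totally ordered abelian group G (written additively) and l in the layering semiring L,
together with a formally adjoined zero LZero.\<close>

datatype ('g, 'l) layered = LZero | Lay 'g 'l

instantiation layered ::
  (linordered_ab_group_add, "{comm_semiring, comm_monoid_mult}") comm_semiring_1
begin

definition zero_layered_def: "0 = LZero"
definition one_layered_def: "1 = Lay 0 1"

fun plus_layered where
  "plus_layered LZero b = b"
| "plus_layered a LZero = a"
| "plus_layered (Lay x k) (Lay y l) =
     (if y < x then Lay x k else if x < y then Lay y l else Lay x (k + l))"

fun times_layered where
  "times_layered LZero b = LZero"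
| "times_layered a LZero = LZero"
| "times_layered (Lay x k) (Lay y l) = Lay (x + y) (k * l)"

instance
proof
  fix a b c :: "('a, 'b) layered"
  show "a + b + c = a + (b + c)"
    by (cases a; cases b; cases c) (auto simp: add.assoc)
  show "a + b = b + a"
    by (cases a; cases b) (auto simp: add.commute)
  show "0 + a = a" by (simp add: zero_layered_def)
  show "a * b * c = a * (b * c)"
    by (cases a; cases b; cases c) (auto simp: add.assoc mult.assoc)
  show "a * b = b * a"
    by (cases a; cases b) (auto simp: add.commute mult.commute)
  show "1 * a = a" by (cases a) (simp_all add: one_layered_def)
  show "0 * a = 0" by (simp add: zero_layered_def)
  show "a * 0 = 0" by (cases a) (simp_all add: zero_layered_def)
  show "(a + b) * c = a * c + b * c"
    by (cases a; cases b; cases c) (auto simp: distrib_right add.commute)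
  show "(0::('a, 'b) layered) \<noteq> 1" by (simp add: zero_layered_def one_layered_def)
qed

end

definition lperm :: "nat \<Rightarrow> (nat \<Rightarrow> nat \<Rightarrow> 'a::comm_semiring_1) \<Rightarrow> 'a" where
  "lperm N A = (\<Sum>\<sigma> \<in> {\<sigma>. \<sigma> permutes {..<N}}. \<Prod>i<N. A i (\<sigma> i))"

text \<open>Sylvester matrix of f (degree m) and g (degree n), 0-indexed, size (m+n) x (m+n):
the first n rows are A_n(f), row r having r leading zeros followed by the coefficients
alpha_0, ..., alpha_m of f; the last m rows are A_m(g) likewise.\<close>
definition sylvester :: "'a::comm_semiring_1 poly \<Rightarrow> 'a poly \<Rightarrow> nat \<Rightarrow> nat \<Rightarrow> 'a" where
  "sylvester f g i j =
     (if i < degree g then (if i \<le> j then coeff f (j - i) else 0)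
      else (if i - degree g \<le> j then coeff g (j - (i - degree g)) else 0))"

definition lresultant :: "'a::comm_semiring_1 poly \<Rightarrow> 'a poly \<Rightarrow> 'a" where
  "lresultant f g =
     (if degree f = 0 then coeff f 0 ^ degree g
      else if degree g = 0 then coeff g 0 ^ degree f
      else lperm (degree f + degree g) (sylvester f g))"

end

theory Submission
  imports Defs
begin

text \<open>Multiplying g by \<lambda> = pCons 0 shifts the coefficients of the g-rows of the Sylvester matrix
one step to the right and adds one row for f. The first column then has the single nonzero
entry alpha_0 (in the first row), so expanding the permanent along it leaves alpha_0 times
the permanent of the old Sylvester matrix; symmetrically for f, where the surviving entry is
beta_0 in the first g-row.\<close>

lemma lperm_cong:
  assumes "\<And>i j. i < N \<Longrightarrow> j < N \<Longrightarrow> A i j = B i j"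
  shows "lperm N A = lperm N B"
  unfolding lperm_def
proof (intro sum.cong prod.cong refl)
  fix \<sigma> i assume "\<sigma> \<in> {\<sigma>. \<sigma> permutes {..<N}}" and "i \<in> {..<N}"
  then show "A i (\<sigma> i) = B i (\<sigma> i)"
    using assms permutes_in_image[of \<sigma> "{..<N}" i] by auto
qed

lemma lperm_permute_rows_cols:
  assumes \<pi>: "\<pi> permutes {..<N}" and \<rho>: "\<rho> permutes {..<N}"
  shows "lperm N (\<lambda>i j. A (\<pi> i) (\<rho> j)) = lperm N A"
proof -
  let ?F = "\<lambda>\<sigma>. \<Prod>i<N. A i (\<sigma> i)"
  have "(\<Prod>i<N. A (\<pi> i) (\<rho> (\<sigma> i))) = ?F (\<rho> \<circ> \<sigma> \<circ> inv \<pi>)" for \<sigma>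
    using prod.reindex_bij_betw[OF permutes_imp_bij[OF \<pi>], of "\<lambda>i. A i ((\<rho> \<circ> \<sigma> \<circ> inv \<pi>) i)"]
    by (simp add: permutes_inverses(2)[OF \<pi>])
  then have "lperm N (\<lambda>i j. A (\<pi> i) (\<rho> j)) = (\<Sum>\<sigma> | \<sigma> permutes {..<N}. ?F (\<rho> \<circ> (\<sigma> \<circ> inv \<pi>)))"
    by (simp add: lperm_def o_assoc)
  also have "\<dots> = (\<Sum>\<sigma> | \<sigma> permutes {..<N}. ?F (\<rho> \<circ> \<sigma>))"
    using sum_permutations_compose_right[OF permutes_inv[OF \<pi>], of "\<lambda>\<sigma>. ?F (\<rho> \<circ> \<sigma>)"] by simp
  also have "\<dots> = lperm N A"
    using setum_permutations_compose_left[OF \<rho>, of ?F] by (simp add: lperm_def)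
  finally show ?thesis .
qed

lemma lperm_expand_last:
  fixes A :: "nat \<Rightarrow> nat \<Rightarrow> 'a::comm_semiring_1"
  assumes "\<And>i. i < N \<Longrightarrow> A i N = 0"
  shows "lperm (Suc N) A = A N N * lperm N A"
proof -
  let ?F = "\<lambda>\<sigma>. \<Prod>i<Suc N. A i (\<sigma> i)"
  let ?P = "{\<sigma>. \<sigma> permutes {..<N}}"
  have vanish: "?F (transpose N b \<circ> \<sigma>) = 0" if b: "b < N" and \<sigma>: "\<sigma> permutes {..<N}" for b \<sigma>
  proof -
    obtain i where "i < N" "\<sigma> i = b"
      using b permutes_image[OF \<sigma>] by (metis imageE lessThan_iff)
    then show ?thesis
      using assms by (intro prod_zero bexI[of _ i]) auto
  qed
  have fixed: "?F \<sigma> = A N N * (\<Prod>i<N. A i (\<sigma> i))" if "\<sigma> permutes {..<N}" for \<sigma>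
    using permutes_not_in[OF that, of N] by (simp add: mult.commute)
  have "lperm (Suc N) A = (\<Sum>b\<in>insert N {..<N}. \<Sum>\<sigma>\<in>?P. ?F (transpose N b \<circ> \<sigma>))"
    unfolding lperm_def lessThan_Suc by (rule sum_over_permutations_insert) auto
  also have "\<dots> = (\<Sum>\<sigma>\<in>?P. ?F \<sigma>)"
    using vanish by (simp add: sum.insert)
  also have "\<dots> = A N N * lperm N A"
    using fixed by (simp add: lperm_def sum_distrib_left)
  finally show ?thesis .
qed

text \<open>Reindexing rows by this permutation of {..N} moves row r to the end and keeps the
order of the remaining rows.\<close>

definition rotate_to_last :: "nat \<Rightarrow> nat \<Rightarrow> nat \<Rightarrow> nat" where
  "rotate_to_last r N i = (if i < r then i else if i < N then Suc i else if i = N then r else i)"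

lemma rotate_to_last_permutes:
  assumes "r \<le> N"
  shows "rotate_to_last r N permutes {..<Suc N}"
proof (rule bij_imp_permutes)
  have inj: "inj_on (rotate_to_last r N) {..<Suc N}"
    using assms unfolding inj_on_def rotate_to_last_def by auto
  moreover have "rotate_to_last r N ` {..<Suc N} \<subseteq> {..<Suc N}"
    using assms by (auto simp: rotate_to_last_def)
  ultimately show "bij_betw (rotate_to_last r N) {..<Suc N} {..<Suc N}"
    by (simp add: bij_betw_def endo_inj_surj)
qed (simp add: rotate_to_last_def)

lemma lperm_expand_column_0:
  fixes A :: "nat \<Rightarrow> nat \<Rightarrow> 'a::comm_semiring_1"
  assumes r: "r \<le> N" and column_0: "\<And>i. i \<le> N \<Longrightarrow> i \<noteq> r \<Longrightarrow> A i 0 = 0"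
  shows "lperm (Suc N) A = A r 0 * lperm N (\<lambda>i j. A (if i < r then i else Suc i) (Suc j))"
proof -
  let ?\<pi> = "rotate_to_last r N" and ?\<rho> = "rotate_to_last 0 N"
  have "lperm (Suc N) A = lperm (Suc N) (\<lambda>i j. A (?\<pi> i) (?\<rho> j))"
    by (rule lperm_permute_rows_cols[symmetric]) (simp_all add: rotate_to_last_permutes r)
  also have "\<dots> = A (?\<pi> N) (?\<rho> N) * lperm N (\<lambda>i j. A (?\<pi> i) (?\<rho> j))"
    by (rule lperm_expand_last) (use column_0 in \<open>auto simp: rotate_to_last_def\<close>)
  also have "A (?\<pi> N) (?\<rho> N) = A r 0"
    using r by (simp add: rotate_to_last_def)
  also have "lperm N (\<lambda>i j. A (?\<pi> i) (?\<rho> j)) = lperm N (\<lambda>i j. A (if i < r then i else Suc i) (Suc j))"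
    by (rule lperm_cong) (simp add: rotate_to_last_def)
  finally show ?thesis .
qed

lemma lperm_lower_triangular:
  fixes A :: "nat \<Rightarrow> nat \<Rightarrow> 'a::comm_semiring_1"
  assumes "\<And>i j. i < j \<Longrightarrow> j < N \<Longrightarrow> A i j = 0"
  shows "lperm N A = (\<Prod>i<N. A i i)"
  using assms
proof (induction N)
  case 0
  then show ?case by (simp add: lperm_def)
next
  case (Suc N)
  then have "lperm (Suc N) A = A N N * lperm N A"
    by (intro lperm_expand_last) auto
  with Suc show ?case by (simp add: mult.commute)
qed

text \<open>The paper's convention for constant f or g agrees with the Sylvester permanent, since
the Sylvester matrix is then diagonal.\<close>

lemma lresultant_eq_lperm_sylvester:
  "lresultant f g = lperm (degree f + degree g) (sylvester f g)"
proof -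
  have "lperm (degree f + degree g) (sylvester f g) = coeff f 0 ^ degree g" if "degree f = 0"
    using that by (subst lperm_lower_triangular) (auto simp: sylvester_def coeff_eq_0)
  moreover have "lperm (degree f + degree g) (sylvester f g) = coeff g 0 ^ degree f" if "degree g = 0"
    using that by (subst lperm_lower_triangular) (auto simp: sylvester_def coeff_eq_0)
  ultimately show ?thesis
    by (simp add: lresultant_def)
qed

lemma lresultant_pCons_0_right:
  fixes f h :: "'a::comm_semiring_1 poly"
  assumes "h \<noteq> 0"
  shows "lresultant f (pCons 0 h) = coeff f 0 * lresultant f h"
proof -
  let ?S = "sylvester f (pCons 0 h)"
  have "lresultant f (pCons 0 h) = lperm (Suc (degree f + degree h)) ?S"
    using assms by (simp add: lresultant_eq_lperm_sylvester)
  also have "\<dots> = ?S 0 0 * lperm (degree f + degree h) (\<lambda>i j. ?S (Suc i) (Suc j))"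
    by (subst lperm_expand_column_0[where r = 0]) (use assms in \<open>auto simp: sylvester_def\<close>)
  also have "lperm (degree f + degree h) (\<lambda>i j. ?S (Suc i) (Suc j)) = lresultant f h"
    unfolding lresultant_eq_lperm_sylvester
    by (rule lperm_cong) (use assms in \<open>auto simp: sylvester_def Suc_diff_le\<close>)
  finally show ?thesis
    using assms by (simp add: sylvester_def)
qed

lemma lresultant_pCons_0_left:
  fixes f g :: "'a::comm_semiring_1 poly"
  assumes "f \<noteq> 0"
  shows "lresultant (pCons 0 f) g = coeff g 0 * lresultant f g"
proof -
  let ?S = "sylvester (pCons 0 f) g"
  have "lresultant (pCons 0 f) g = lperm (Suc (degree f + degree g)) ?S"
    using assms by (simp add: lresultant_eq_lperm_sylvester)
  also have "\<dots> = ?S (degree g) 0 *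
      lperm (degree f + degree g) (\<lambda>i j. ?S (if i < degree g then i else Suc i) (Suc j))"
    by (rule lperm_expand_column_0) (auto simp: sylvester_def)
  also have "lperm (degree f + degree g) (\<lambda>i j. ?S (if i < degree g then i else Suc i) (Suc j))
      = lresultant f g"
    unfolding lresultant_eq_lperm_sylvester
    by (rule lperm_cong) (auto simp: sylvester_def Suc_diff_le)
  finally show ?thesis
    by (simp add: sylvester_def)
qed

lemma monom_1_mult_eq_0_iff: "monom 1 t * p = 0 \<longleftrightarrow> p = (0::'a::comm_semiring_1 poly)"
  by (induction t) (simp_all add: monom_Suc)

lemma lresultant_monom_1_mult_right:
  fixes f g :: "'a::comm_semiring_1 poly"
  assumes "g \<noteq> 0"
  shows "lresultant f (monom 1 t * g) = coeff f 0 ^ t * lresultant f g"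
  by (induction t)
    (simp_all add: monom_Suc lresultant_pCons_0_right monom_1_mult_eq_0_iff assms mult.assoc)

lemma lresultant_monom_1_mult_left:
  fixes f g :: "'a::comm_semiring_1 poly"
  assumes "f \<noteq> 0"
  shows "lresultant (monom 1 t * f) g = coeff g 0 ^ t * lresultant f g"
  by (induction t)
    (simp_all add: monom_Suc lresultant_pCons_0_left monom_1_mult_eq_0_iff assms mult.assoc)

theorem corollary8p19:
  fixes f g :: "('g::linordered_ab_group_add,
                 'l::{comm_semiring, comm_monoid_mult, linorder, ordered_ab_semigroup_add}) layered poly"
    and t :: nat
  shows "(g \<noteq> 0 \<longrightarrow> lresultant f (monom 1 t * g) = coeff f 0 ^ t * lresultant f g)
       \<and> (f \<noteq> 0 \<longrightarrow> lresultant (monom 1 t * f) g = coeff g 0 ^ t * lresultant f g)"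
  by (simp add: lresultant_monom_1_mult_right lresultant_monom_1_mult_left)

end
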